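(* Let $G=(V,E)$ be a graph with at least one edge and let $uv\in E$. Set $l_{uv}=|N(u)\cup N(v)|$, $m_u=|N[u]|$, $m_v=|N[v]|$. Then $$\frac{1}{2^{l_{uv}-2}+2^{l_{uv}-m_u}+2^{l_{uv}-m_v}+1}\le\frac{\sigma_0\big(G-(N[v]\cup N[u])\big)}{\sigma_0(G)}\le 1-\frac{\sigma_0(G-v)}{\sigma_0(G)}.$$ In particular, $$\frac{\sigma_0\big(G-(N[v]\cup N[u])\big)}{\sigma_0(G)}\ge\frac{1}{3\cdot 2^{l_{uv}-2}+1}.$$
   Context: All graphs are finite and simple. $\sigma_0(G)$ denotes the number of independent vertex sets of $G$ (including the empty set). $N(v)$ is the set of neighbours of $v$ and $N[v]=N(v)\cup\{v\}$. For $S\subseteq V$, $G-S$ is the subgraph induced by $V\setminus S$, and $G-v=G-\{v\}$; the graph with no vertices has $\sigma_0=1$. *)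

theory Defs
  imports Complex_Main
begin

definition simple_graph :: "'a set \<Rightarrow> ('a \<Rightarrow> 'a \<Rightarrow> bool) \<Rightarrow> bool" where
  "simple_graph V E \<longleftrightarrow> finite V \<and> (\<forall>x y. E x y \<longrightarrow> E y x)
     \<and> (\<forall>x. \<not> E x x) \<and> (\<forall>x y. E x y \<longrightarrow> x \<in> V \<and> y \<in> V)"

definition open_nbhd :: "'a set \<Rightarrow> ('a \<Rightarrow> 'a \<Rightarrow> bool) \<Rightarrow> 'a \<Rightarrow> 'a set" where
  "open_nbhd V E v = {w \<in> V. E v w}"

definition closed_nbhd :: "'a set \<Rightarrow> ('a \<Rightarrow> 'a \<Rightarrow> bool) \<Rightarrow> 'a \<Rightarrow> 'a set" where
  "closed_nbhd V E v = insert v (open_nbhd V E v)"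

definition independent :: "('a \<Rightarrow> 'a \<Rightarrow> bool) \<Rightarrow> 'a set \<Rightarrow> bool" where
  "independent E I \<longleftrightarrow> (\<forall>x\<in>I. \<forall>y\<in>I. \<not> E x y)"

text \<open>The induced subgraph G - S is represented by vertex set V - S with the same E.\<close>

definition sigma0 :: "'a set \<Rightarrow> ('a \<Rightarrow> 'a \<Rightarrow> bool) \<Rightarrow> nat" where
  "sigma0 V E = card {I. I \<subseteq> V \<and> independent E I}"

end

theory Submission
  imports Defs
begin

text \<open>Let \<open>S = N[u] \<union> N[v]\<close>. Splitting an independent set of \<open>G\<close> into its parts inside and
outside \<open>S\<close> gives \<open>\<sigma>\<^sub>0(G) \<le> \<sigma>\<^sub>0(G[S]) \<sigma>\<^sub>0(G - S)\<close>, and an independent subset of \<open>S\<close> contains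
neither \<open>u\<close> nor \<open>v\<close>, or contains \<open>u\<close> and otherwise lies in \<open>S - N[u]\<close>, or symmetrically for \<open>v\<close>;
this bounds \<open>\<sigma>\<^sub>0(G[S])\<close> by \<open>2\<^bsup>l-2\<^esup> + 2\<^bsup>l-m\<^sub>u\<^esup> + 2\<^bsup>l-m\<^sub>v\<^esup>\<close>. For the upper bound, the independent
sets of \<open>G\<close> are those of \<open>G - v\<close> together with \<open>v\<close> added to those of \<open>G - N[v] \<supseteq> G - S\<close>.\<close>

lemma finite_independent_subsets: "finite V \<Longrightarrow> finite {I. I \<subseteq> V \<and> independent E I}"
  by (rule finite_subset[of _ "Pow V"]) auto

lemma sigma0_pos: "finite V \<Longrightarrow> 0 < sigma0 V E"
  unfolding sigma0_def
  by (subst card_gt_0_iff) (auto simp: finite_independent_subsets independent_def)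

lemma sigma0_mono: "finite V \<Longrightarrow> W \<subseteq> V \<Longrightarrow> sigma0 W E \<le> sigma0 V E"
  unfolding sigma0_def by (intro card_mono finite_independent_subsets) auto

lemma sigma0_submultiplicative:
  assumes "finite V" and "S \<subseteq> V"
  shows "sigma0 V E \<le> sigma0 S E * sigma0 (V - S) E"
proof -
  let ?A = "{J. J \<subseteq> S \<and> independent E J}"
  let ?B = "{J. J \<subseteq> V - S \<and> independent E J}"
  have "card {I. I \<subseteq> V \<and> independent E I} \<le> card (?A \<times> ?B)"
  proof (rule card_inj_on_le[where f = "\<lambda>I. (I \<inter> S, I - S)"])
    show "inj_on (\<lambda>I. (I \<inter> S, I - S)) {I. I \<subseteq> V \<and> independent E I}"
      by (rule inj_onI) auto
    show "(\<lambda>I. (I \<inter> S, I - S)) ` {I. I \<subseteq> V \<and> independent E I} \<subseteq> ?A \<times> ?B"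
      by (auto simp: independent_def)
    show "finite (?A \<times> ?B)"
      using assms by (intro finite_cartesian_product finite_independent_subsets)
        (auto intro: finite_subset)
  qed
  then show ?thesis
    unfolding sigma0_def card_cartesian_product .
qed

lemma sigma0_delete_vertex:
  assumes "finite V" and "v \<in> V" and "symp E" and "\<not> E v v"
  shows "sigma0 V E = sigma0 (V - {v}) E + sigma0 (V - closed_nbhd V E v) E"
proof -
  let ?I = "\<lambda>W. {I. I \<subseteq> W \<and> independent E I}"
  have split: "?I V = ?I (V - {v}) \<union> insert v ` ?I (V - closed_nbhd V E v)"
  proof (intro equalityI subsetI)
    fix I assume I: "I \<in> ?I V"
    show "I \<in> ?I (V - {v}) \<union> insert v ` ?I (V - closed_nbhd V E v)"
    proof (cases "v \<in> I")
      case True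
      then have "I - {v} \<in> ?I (V - closed_nbhd V E v)" and "I = insert v (I - {v})"
        using I by (auto simp: independent_def closed_nbhd_def open_nbhd_def)
      then show ?thesis by blast
    qed (use I in auto)
  next
    fix I assume "I \<in> ?I (V - {v}) \<union> insert v ` ?I (V - closed_nbhd V E v)"
    then show "I \<in> ?I V"
      using assms by (auto simp: independent_def closed_nbhd_def open_nbhd_def dest: sympD)
  qed
  have "inj_on (insert v) (?I (V - closed_nbhd V E v))"
    by (rule inj_onI) (auto simp: closed_nbhd_def)
  moreover have "?I (V - {v}) \<inter> insert v ` ?I (V - closed_nbhd V E v) = {}"
    by auto
  ultimately show ?thesis
    unfolding sigma0_def split using assms(1)
    by (subst card_Un_disjoint) (auto simp: card_image finite_independent_subsets)
qed

lemma sigma0_le_edge_split: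
  assumes "finite S" and "E u v"
  shows "sigma0 S E \<le> 2 ^ card (S - {u, v})
    + 2 ^ card (S - closed_nbhd V E u) + 2 ^ card (S - closed_nbhd V E v)"
proof -
  let ?Pu = "insert u ` Pow (S - closed_nbhd V E u)"
  let ?Pv = "insert v ` Pow (S - closed_nbhd V E v)"
  have "{J. J \<subseteq> S \<and> independent E J} \<subseteq> Pow (S - {u, v}) \<union> ?Pu \<union> ?Pv"
  proof
    fix J assume J: "J \<in> {J. J \<subseteq> S \<and> independent E J}"
    have "u \<notin> J \<or> v \<notin> J"
      using J \<open>E u v\<close> by (auto simp: independent_def)
    moreover have "J \<in> ?Pu" if "u \<in> J"
      using J that by (intro image_eqI[of _ _ "J - {u}"])
        (auto simp: independent_def closed_nbhd_def open_nbhd_def)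
    moreover have "J \<in> ?Pv" if "v \<in> J"
      using J that by (intro image_eqI[of _ _ "J - {v}"])
        (auto simp: independent_def closed_nbhd_def open_nbhd_def)
    ultimately show "J \<in> Pow (S - {u, v}) \<union> ?Pu \<union> ?Pv"
      using J by auto
  qed
  then have "sigma0 S E \<le> card (Pow (S - {u, v}) \<union> ?Pu \<union> ?Pv)"
    unfolding sigma0_def using assms(1) by (intro card_mono) auto
  also have "\<dots> \<le> card (Pow (S - {u, v})) + card ?Pu + card ?Pv"
    by (meson add_mono card_Un_le le_refl order_trans)
  also have "\<dots> \<le> card (Pow (S - {u, v})) + card (Pow (S - closed_nbhd V E u))
      + card (Pow (S - closed_nbhd V E v))"
    by (intro add_mono card_image_le) (use assms(1) in auto)
  finally show ?thesis
    using assms(1) by (simp add: card_Pow)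
qed

lemma sigma0_delete_vertex_le:
  assumes "finite V" and "v \<in> V" and "symp E" and "\<not> E v v" and "closed_nbhd V E v \<subseteq> W"
  shows "sigma0 (V - {v}) E + sigma0 (V - W) E \<le> sigma0 V E"
  using sigma0_delete_vertex[OF assms(1-4)] sigma0_mono[of "V - closed_nbhd V E v" "V - W" E] assms
  by auto

lemma
  assumes "simple_graph V E" and "E u v"
  shows closed_nbhds_edge_eq:
      "closed_nbhd V E v \<union> closed_nbhd V E u = open_nbhd V E u \<union> open_nbhd V E v"
    and two_le_card_closed_nbhd: "2 \<le> card (closed_nbhd V E u)"
proof -
  have "u \<in> V" "v \<in> V" "E v u" "u \<noteq> v" and fin: "finite V"
    using assms by (auto simp: simple_graph_def)
  then show "closed_nbhd V E v \<union> closed_nbhd V E u = open_nbhd V E u \<union> open_nbhd V E v"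
    using assms(2) by (auto simp: closed_nbhd_def open_nbhd_def)
  have "{u, v} \<subseteq> closed_nbhd V E u"
    using \<open>v \<in> V\<close> assms(2) by (auto simp: closed_nbhd_def open_nbhd_def)
  moreover have "finite (closed_nbhd V E u)"
    using fin by (auto simp: closed_nbhd_def open_nbhd_def)
  ultimately show "2 \<le> card (closed_nbhd V E u)"
    using \<open>u \<noteq> v\<close> by (metis card_2_iff card_mono)
qed

lemma sigma0_le_closed_nbhds_mult:
  assumes "simple_graph V E" and "E u v"
  defines "S \<equiv> closed_nbhd V E u \<union> closed_nbhd V E v"
  shows "sigma0 V E \<le> (2 ^ (card S - 2) + 2 ^ (card S - card (closed_nbhd V E u))
    + 2 ^ (card S - card (closed_nbhd V E v))) * sigma0 (V - S) E"
proof -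
  have "finite V" and "S \<subseteq> V" and "u \<noteq> v" and "{u, v} \<subseteq> S"
    using assms by (auto simp: simple_graph_def S_def closed_nbhd_def open_nbhd_def)
  moreover from this have "finite S"
    by (blast intro: finite_subset)
  ultimately have "card (S - {u, v}) = card S - 2"
    and "card (S - closed_nbhd V E u) = card S - card (closed_nbhd V E u)"
    and "card (S - closed_nbhd V E v) = card S - card (closed_nbhd V E v)"
    by (simp_all add: S_def card_Diff_subset finite_subset)
  then have "sigma0 S E \<le> 2 ^ (card S - 2) + 2 ^ (card S - card (closed_nbhd V E u))
      + 2 ^ (card S - card (closed_nbhd V E v))"
    using sigma0_le_edge_split[of S E u v V] \<open>finite S\<close> \<open>E u v\<close> by simp
  then show ?thesis
    using sigma0_submultiplicative[OF \<open>finite V\<close> \<open>S \<subseteq> V\<close>, of E] mult_right_mono order_trans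
    by blast
qed

lemma powi_diff_of_nat:
  "m \<le> n \<Longrightarrow> (x :: 'a :: division_ring) powi (int n - int m) = x ^ (n - m)"
  by (metis of_nat_diff power_int_of_nat)

lemma inverse_succ_le_ratio:
  fixes s w D B :: real
  assumes "0 < s" and "s \<le> D * w" and "0 \<le> D" and "D \<le> B"
  shows "1 / (B + 1) \<le> w / s"
proof -
  have "0 \<le> w"
    using assms by (smt (verit) mult_nonneg_nonpos)
  then have "s \<le> (B + 1) * w"
    using assms by (smt (verit) mult_right_mono)
  then show ?thesis
    using assms by (simp add: divide_simps mult.commute)
qed

lemma ratio_bounds_of_counts:
  fixes s t w l mu mv :: nat
  assumes "0 < s" and "s \<le> (2 ^ (l - 2) + 2 ^ (l - mu) + 2 ^ (l - mv)) * w" and "t + w \<le> s"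
    and "2 \<le> mu" and "mu \<le> l" and "2 \<le> mv" and "mv \<le> l"
  shows "1 / ((2::real) powi (int l - 2) + 2 powi (int l - int mu) + 2 powi (int l - int mv) + 1)
           \<le> real w / real s"
    and "real w / real s \<le> 1 - real t / real s"
    and "1 / (3 * (2::real) powi (int l - 2) + 1) \<le> real w / real s"
proof -
  define D :: real where "D = 2 ^ (l - 2) + 2 ^ (l - mu) + 2 ^ (l - mv)"
  have upper: "real s \<le> D * real w"
    using assms(2) unfolding D_def of_nat_le_iff[symmetric, where 'a = real] by simp
  have "(2::real) ^ (l - mu) \<le> 2 ^ (l - 2)" and "(2::real) ^ (l - mv) \<le> 2 ^ (l - 2)"
    using assms by (intro power_increasing; simp)+
  then have "D \<le> 3 * 2 ^ (l - 2)"
    unfolding D_def by linarith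
  moreover have "0 \<le> D"
    unfolding D_def by simp
  ultimately have "1 / (D + 1) \<le> real w / real s" and "1 / (3 * 2 ^ (l - 2) + 1) \<le> real w / real s"
    using inverse_succ_le_ratio[OF _ upper] \<open>0 < s\<close> by simp_all
  moreover have "(2::real) powi (int l - 2) = 2 ^ (l - 2)"
    using powi_diff_of_nat[of 2 l "2::real"] assms by simp
  ultimately show "1 / ((2::real) powi (int l - 2) + 2 powi (int l - int mu) + 2 powi (int l - int mv) + 1)
           \<le> real w / real s"
    and "1 / (3 * (2::real) powi (int l - 2) + 1) \<le> real w / real s"
    using assms by (simp_all add: D_def powi_diff_of_nat)
  show "real w / real s \<le> 1 - real t / real s"
    using assms(1,3) by (simp add: field_simps)
qed

theorem mainTheorem14:
  fixes V :: "'a set" and E :: "'a \<Rightarrow> 'a \<Rightarrow> bool" and u v :: 'a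
  assumes "simple_graph V E"
    and "E u v"
  defines "l \<equiv> card (open_nbhd V E u \<union> open_nbhd V E v)"
    and "mu \<equiv> card (closed_nbhd V E u)"
    and "mv \<equiv> card (closed_nbhd V E v)"
  shows "1 / ((2::real) powi (int l - 2) + 2 powi (int l - int mu) + 2 powi (int l - int mv) + 1)
           \<le> real (sigma0 (V - (closed_nbhd V E v \<union> closed_nbhd V E u)) E) / real (sigma0 V E)
    \<and> real (sigma0 (V - (closed_nbhd V E v \<union> closed_nbhd V E u)) E) / real (sigma0 V E)
           \<le> 1 - real (sigma0 (V - {v}) E) / real (sigma0 V E)
    \<and> real (sigma0 (V - (closed_nbhd V E v \<union> closed_nbhd V E u)) E) / real (sigma0 V E)
           \<ge> 1 / (3 * (2::real) powi (int l - 2) + 1)"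
proof -
  let ?S = "closed_nbhd V E v \<union> closed_nbhd V E u"
  have fin: "finite V" and "E v u" and "v \<in> V" and "symp E" and "\<not> E v v"
    using assms(1,2) by (auto simp: simple_graph_def symp_def)
  have l: "l = card ?S"
    unfolding l_def closed_nbhds_edge_eq[OF assms(1,2)] ..
  have "finite ?S"
    using fin by (auto simp: closed_nbhd_def open_nbhd_def)
  then have "mu \<le> l" and "mv \<le> l"
    unfolding l mu_def mv_def by (auto intro: card_mono)
  moreover have "2 \<le> mu" and "2 \<le> mv"
    unfolding mu_def mv_def
    using two_le_card_closed_nbhd[OF assms(1,2)] two_le_card_closed_nbhd[OF assms(1) \<open>E v u\<close>] .
  moreover have "sigma0 V E \<le> (2 ^ (l - 2) + 2 ^ (l - mu) + 2 ^ (l - mv)) * sigma0 (V - ?S) E"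
    using sigma0_le_closed_nbhds_mult[OF assms(1,2)] unfolding l mu_def mv_def
    by (simp add: Un_commute)
  moreover have "sigma0 (V - {v}) E + sigma0 (V - ?S) E \<le> sigma0 V E"
    using fin \<open>v \<in> V\<close> \<open>symp E\<close> \<open>\<not> E v v\<close> by (rule sigma0_delete_vertex_le) auto
  ultimately show ?thesis
    using ratio_bounds_of_counts[OF sigma0_pos[OF fin]] by blast
qed

end
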